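(* For $T>0$ let $\psi_T$ be the solution of the adjoint LSS problem on $[0,T]$ and define the adjoint LSS sensitivity $$S_T=\frac1T\int_0^T\big(J_s+\psi_T^Tf_s\big)\,dt,$$ and the shadowing sensitivity $S_T^\infty=\frac1T\int_0^T\big(J_s+\psi^{\infty T}f_s\big)\,dt$. Assume $\|f_s\|_\infty=\sup_t\|f_s(t)\|<\infty$ and that $\big|S_T^\infty-\frac{d\bar J}{ds}\big|=\mathcal{O}(T^{-1/2})$ as $T\to\infty$, where $\frac{d\bar J}{ds}$ is the true sensitivity (this holds e.g. for mixing systems by the central limit theorem). Then $$\Big|S_T-\frac{d\bar J}{ds}\Big|\le\frac{\|e_h\|_2\|f_s\|_\infty}{\sqrt T}+\frac{\|f_s\|_\infty\int_0^T\|e_p(t)\|\,dt}{T}+\mathcal{O}\Big(\frac1{\sqrt T}\Big),$$ where $\|e_h\|_2$ and $\int_0^T\|e_p(t)\|dt$ remain bounded as $T\to\infty$; in particular $S_T\to\frac{d\bar J}{ds}$ at the rate $\mathcal{O}(T^{-1/2})$.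
   Context: Let $X=\mathbb{R}^n$. Let $f:X\times\mathbb{R}\to X$ be $C^2$, $s$ the parameter, $u(t)$ a solution of $\frac{du}{dt}=f(u,s)$ remaining in a compact set; write $f(t)$, $f_u=\partial f/\partial u$, $f_u^*=f_u^T$, $f_s=\partial f/\partial s$ along $u(t)$. Let $J$ be a smooth output, $J_u$, $J_s$ its partial derivatives along $u(t)$, $\bar J(s)=\lim_{T\to\infty}\frac1T\int_0^TJ\,dt$ (independent of the initial condition by ergodicity), and $\frac{d\bar J}{ds}$ the true derivative, assumed to exist. Fix $\alpha^2>0$. The adjoint LSS problem on $[0,T]$: $\frac{d\psi}{dt}+f_u^*\psi+J_u=r$, $\psi(0)=\psi(T)=0$, $\frac{dr}{dt}-f_ur=\frac1{\alpha^2}(\psi^Tf+J-\bar J)f$. The adjoint shadowing direction $\psi^\infty$ is a bounded solution on $[0,\infty)$ of $\frac{d\psi^\infty}{dt}+f_u^*\psi^\infty+J_u=0$ with $\lim_{T\to\infty}\frac1T\int_0^T\psi^{\infty T}f\,dt=0$. Uniform hyperbolicity: Lyapunov exponents $\lambda_i$ with exactly one zero $\lambda_{n_0}=0$; covariant Lyapunov vectors $\phi_i$ ($\dot\phi_i=f_u\phi_i-\lambda_i\phi_i$, $\phi_{n_0}=f$) and adjoint ones $\hat\phi_i$ ($-\dot{\hat\phi}_i=f_u^*\hat\phi_i-\lambda_i\hat\phi_i$), bases of $X$, $\phi_i^T\hat\phi_j=\delta_{ij}$, $c_{\min}I\le\hat\Phi^T\hat\Phi\le c_{\max}I$ uniformly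 with $0<c_{\min}\le c_{\max}$. Error decomposition: $\psi_T-\psi^\infty=e_h+e_p$ where $e_p(t)=ae^{-t}+be^{-(T-t)}$, $a=\frac{e(0)-e^{-T}e(T)}{1-e^{-2T}}$, $b=\frac{e(T)-e^{-T}e(0)}{1-e^{-2T}}$, $e(0)=-\psi^\infty(0)$, $e(T)=-\psi^\infty(T)$, and $e_h$ vanishes at $0$ and $T$. $\|g\|_2=(\int_0^Tg^Tg\,dt)^{1/2}$, $\|g(t)\|=(g(t)^Tg(t))^{1/2}$. *)

theory Defs
  imports "HOL-Analysis.Analysis" "HOL-Library.Landau_Symbols"
begin

definition C2 :: "('a::real_normed_vector \<Rightarrow> 'b::real_normed_vector) \<Rightarrow> bool" where
  "C2 g \<longleftrightarrow> (\<exists>D D2. (\<forall>z. (g has_derivative blinfun_apply (D z)) (at z)) \<and>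
                      (\<forall>z. (D has_derivative blinfun_apply (D2 z)) (at z)) \<and>
                      continuous_on UNIV D2)"

fun dder :: "('a::real_normed_vector \<Rightarrow> real) \<Rightarrow> 'a list \<Rightarrow> 'a \<Rightarrow> real" where
  "dder g [] = g"
| "dder g (v # vs) = (\<lambda>x. frechet_derivative (dder g vs) (at x) v)"

definition smooth :: "('a::real_normed_vector \<Rightarrow> real) \<Rightarrow> bool" where
  "smooth g \<longleftrightarrow> (\<forall>vs x. dder g vs differentiable (at x))"

definition pfu :: "(real^'n \<Rightarrow> real \<Rightarrow> real^'n) \<Rightarrow> real \<Rightarrow> real^'n \<Rightarrow> real^'n^'n" where
  "pfu f s x = matrix (\<lambda>h. frechet_derivative (\<lambda>(y, p). f y p) (at (x, s)) (h, 0))"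

definition pfs :: "(real^'n \<Rightarrow> real \<Rightarrow> real^'n) \<Rightarrow> real \<Rightarrow> real^'n \<Rightarrow> real^'n" where
  "pfs f s x = frechet_derivative (\<lambda>(y, p). f y p) (at (x, s)) (0, 1)"

definition pJu :: "(real^'n \<Rightarrow> real \<Rightarrow> real) \<Rightarrow> real \<Rightarrow> real^'n \<Rightarrow> real^'n" where
  "pJu J s x = (\<chi> i. frechet_derivative (\<lambda>(y, p). J y p) (at (x, s)) (axis i 1, 0))"

definition pJs :: "(real^'n \<Rightarrow> real \<Rightarrow> real) \<Rightarrow> real \<Rightarrow> real^'n \<Rightarrow> real" where
  "pJs J s x = frechet_derivative (\<lambda>(y, p). J y p) (at (x, s)) (0, 1)"

definition eA :: "(real \<Rightarrow> real^'n) \<Rightarrow> real \<Rightarrow> real^'n" where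
  "eA psiinf T = (1 / (1 - exp (-2*T))) *\<^sub>R ((- psiinf 0) - exp (-T) *\<^sub>R (- psiinf T))"

definition eB :: "(real \<Rightarrow> real^'n) \<Rightarrow> real \<Rightarrow> real^'n" where
  "eB psiinf T = (1 / (1 - exp (-2*T))) *\<^sub>R ((- psiinf T) - exp (-T) *\<^sub>R (- psiinf 0))"

definition ep :: "(real \<Rightarrow> real^'n) \<Rightarrow> real \<Rightarrow> real \<Rightarrow> real^'n" where
  "ep psiinf T t = exp (-t) *\<^sub>R eA psiinf T + exp (-(T - t)) *\<^sub>R eB psiinf T"

definition eh :: "(real \<Rightarrow> real \<Rightarrow> real^'n) \<Rightarrow> (real \<Rightarrow> real^'n) \<Rightarrow> real \<Rightarrow> real \<Rightarrow> real^'n" where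
  "eh psiT psiinf T t = psiT T t - psiinf t - ep psiinf T t"

definition L2norm :: "real \<Rightarrow> (real \<Rightarrow> real^'n) \<Rightarrow> real" where
  "L2norm T g = sqrt (integral {0..T} (\<lambda>t. g t \<bullet> g t))"

end

theory Submission
  imports Defs "HOL-Real_Asymp.Real_Asymp"
begin

text \<open>Since \<open>\<psi>\<^sup>\<infinity>\<close> solves the adjoint equation, \<open>\<psi>\<^sup>\<infinity> \<bullet> f + J\<close> is conserved along the
  trajectory and its mean forces it to equal \<open>J\<^sub>b\<^sub>a\<^sub>r\<close>. Hence \<open>w = \<psi>\<^sub>T - \<psi>\<^sup>\<infinity>\<close> solves the
  homogeneous LSS system, forced only through the neutral direction, with \<open>|w(0)|, |w(T)|\<close> bounded.
  The energy identity \<open>(w \<bullet> r)' = |r|\<^sup>2 + \<alpha>\<^sup>-\<^sup>2 (w \<bullet> f)\<^sup>2\<close>, together with local bounds on \<open>r\<close> at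
  the two ends, bounds \<open>\<parallel>r\<parallel>\<^sub>2\<close> and \<open>\<parallel>w \<bullet> f\<parallel>\<^sub>2\<close> uniformly in \<open>T\<close>; every hyperbolic
  component \<open>w \<bullet> \<phi>\<^sub>i\<close> then solves a scalar equation with rate \<open>\<lambda>\<^sub>i \<noteq> 0\<close>, so \<open>\<parallel>w\<parallel>\<^sub>2\<close> is bounded as
  well. Splitting \<open>w = e\<^sub>h + e\<^sub>p\<close> and applying Cauchy-Schwarz to \<open>\<integral> (e\<^sub>h + e\<^sub>p) \<bullet> f\<^sub>s\<close> yields the
  estimate and the \<open>T\<^sup>-\<^sup>1\<^sup>/\<^sup>2\<close> rate.\<close>

lemma square_integral_le:
  fixes g :: "real \<Rightarrow> real"
  assumes ab: "a \<le> b" and cont: "continuous_on {a..b} g"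
  shows "(integral {a..b} g)\<^sup>2 \<le> (b - a) * integral {a..b} (\<lambda>x. (g x)\<^sup>2)"
proof (cases "a = b")
  case False
  with ab have ba: "b - a > 0" by simp
  define I where "I = integral {a..b} g"
  define G where "G = integral {a..b} (\<lambda>x. (g x)\<^sup>2)"
  define m where "m = I / (b - a)"
  have "(g has_integral I) {a..b}"
    unfolding I_def using cont by (intro integrable_integral integrable_continuous_interval)
  moreover have "((\<lambda>x. (g x)\<^sup>2) has_integral G) {a..b}"
    unfolding G_def using cont by (intro integrable_integral integrable_continuous_interval continuous_intros)
  moreover have "((\<lambda>x. m\<^sup>2) has_integral (m\<^sup>2 * (b - a))) {a..b}"
    using has_integral_const_real[of "m\<^sup>2" a b] ab by (simp add: mult.commute)
  ultimately have "((\<lambda>x. (g x)\<^sup>2 - (2 * m) * g x + m\<^sup>2) has_integral (G - 2 * m * I + m\<^sup>2 * (b - a))) {a..b}"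
    by (intro has_integral_add has_integral_diff has_integral_mult_right)
  moreover have "(g x)\<^sup>2 - (2 * m) * g x + m\<^sup>2 = (g x - m)\<^sup>2" for x
    by (simp add: power2_eq_square algebra_simps)
  ultimately have "((\<lambda>x. (g x - m)\<^sup>2) has_integral (G - 2 * m * I + m\<^sup>2 * (b - a))) {a..b}"
    by simp
  then have "0 \<le> G - 2 * m * I + m\<^sup>2 * (b - a)"
    by (rule has_integral_nonneg) simp
  moreover have "m\<^sup>2 * (b - a) = I\<^sup>2 / (b - a)" "2 * m * I = 2 * (I\<^sup>2 / (b - a))"
    using ba unfolding m_def by (simp_all add: power2_eq_square)
  ultimately have "I\<^sup>2 / (b - a) \<le> G" by simp
  then show ?thesis
    unfolding I_def[symmetric] G_def[symmetric] using ba by (simp add: field_simps)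
qed simp

lemma integral_abs_le_sqrt_integral_square:
  fixes g :: "real \<Rightarrow> real"
  assumes sub: "{a..a + 1} \<subseteq> {0..T}" and cont: "continuous_on {0..T} g"
  shows "integral {a..a + 1} (\<lambda>t. \<bar>g t\<bar>) \<le> sqrt (integral {0..T} (\<lambda>t. (g t)\<^sup>2))"
proof -
  have cont': "continuous_on {a..a + 1} g" using cont sub continuous_on_subset by blast
  have "(integral {a..a + 1} (\<lambda>t. \<bar>g t\<bar>))\<^sup>2 \<le> integral {a..a + 1} (\<lambda>t. (g t)\<^sup>2)"
    using square_integral_le[of a "a + 1" "\<lambda>t. \<bar>g t\<bar>"] cont' by (simp add: continuous_intros)
  also have "\<dots> \<le> integral {0..T} (\<lambda>t. (g t)\<^sup>2)"
    by (rule integral_subset_le[OF sub])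
      (use cont' cont in \<open>auto intro!: integrable_continuous_interval continuous_intros\<close>)
  finally show ?thesis
    by (intro real_le_rsqrt integral_nonneg)
      (use cont' in \<open>auto intro!: integrable_continuous_interval continuous_intros\<close>)
qed

lemma norm_endpoints_le_integral:
  fixes r r' :: "real \<Rightarrow> 'a::banach"
  assumes ab: "a \<le> b"
    and deriv: "\<And>t. t \<in> {a..b} \<Longrightarrow> (r has_vector_derivative r' t) (at t within {a..b})"
    and cont: "continuous_on {a..b} g" and bound: "\<And>t. t \<in> {a..b} \<Longrightarrow> norm (r' t) \<le> g t"
  shows "(b - a) * norm (r a) \<le> integral {a..b} (\<lambda>t. norm (r t)) + (b - a) * integral {a..b} g"
    and "(b - a) * norm (r b) \<le> integral {a..b} (\<lambda>t. norm (r t)) + (b - a) * integral {a..b} g"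
proof -
  let ?G = "integral {a..b} g"
  have cont_r: "continuous_on {a..b} r"
    by (rule continuous_on_vector_derivative) (use deriv in auto)
  have g_int: "g integrable_on {c..d}" if "{c..d} \<subseteq> {a..b}" for c d
    using cont that by (meson continuous_on_subset integrable_continuous_interval)
  have g_nonneg: "0 \<le> g t" if "t \<in> {a..b}" for t
    using bound[OF that] norm_ge_zero order_trans by blast
  have increment: "norm (r d - r c) \<le> ?G" if "a \<le> c" "c \<le> d" "d \<le> b" for c d
  proof -
    have "(r' has_integral (r d - r c)) {c..d}"
      by (rule fundamental_theorem_of_calculus)
        (use that in \<open>auto intro: has_vector_derivative_within_subset[OF deriv]\<close>)
    then have "r d - r c = integral {c..d} r'" and "r' integrable_on {c..d}"
      by (auto simp: integral_unique has_integral_integrable)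
    then have "norm (r d - r c) \<le> integral {c..d} g"
      using that by (auto intro!: integral_norm_bound_integral g_int bound)
    also have "\<dots> \<le> ?G"
      by (rule integral_subset_le) (use that g_int g_nonneg in auto)
    finally show ?thesis .
  qed
  have "(\<lambda>t. norm (r t) + ?G) integrable_on {a..b}"
    using cont_r by (intro integrable_continuous_interval continuous_intros)
  moreover have "integral {a..b} (\<lambda>t. norm (r t) + ?G) = integral {a..b} (\<lambda>t. norm (r t)) + (b - a) * ?G"
    using ab cont_r by (subst integral_add) (auto intro!: integrable_continuous_interval continuous_intros)
  moreover have "norm (r a) \<le> norm (r t) + ?G" "norm (r b) \<le> norm (r t) + ?G" if "t \<in> {a..b}" for t
    using increment[of a t] increment[of t b] that norm_triangle_ineq2[of "r a" "r t"]
      norm_triangle_ineq2[of "r b" "r t"] norm_minus_commute[of "r a" "r t"] by auto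
  ultimately show "(b - a) * norm (r a) \<le> integral {a..b} (\<lambda>t. norm (r t)) + (b - a) * ?G"
    and "(b - a) * norm (r b) \<le> integral {a..b} (\<lambda>t. norm (r t)) + (b - a) * ?G"
    using ab integral_le[of "\<lambda>t. norm (r a)" "{a..b}" "\<lambda>t. norm (r t) + ?G"]
      integral_le[of "\<lambda>t. norm (r b)" "{a..b}" "\<lambda>t. norm (r t) + ?G"] by auto
qed

text \<open>For \<open>c' = \<rho> - l c\<close> with \<open>l \<noteq> 0\<close>, integrate \<open>(c\<^sup>2)' = 2 c \<rho> - 2 l c\<^sup>2\<close> and absorb \<open>2 c \<rho>\<close>
  by AM-GM, whichever the sign of \<open>l\<close>.\<close>

lemma square_integral_le_of_linear_ode:
  fixes c \<rho> :: "real \<Rightarrow> real"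
  assumes T: "0 \<le> T"
    and deriv: "\<And>t. t \<in> {0..T} \<Longrightarrow> (c has_vector_derivative (\<rho> t - l * c t)) (at t within {0..T})"
    and cont: "continuous_on {0..T} \<rho>" and l: "l \<noteq> 0"
  shows "\<bar>l\<bar> * integral {0..T} (\<lambda>t. (c t)\<^sup>2)
           \<le> (c 0)\<^sup>2 + (c T)\<^sup>2 + integral {0..T} (\<lambda>t. (\<rho> t)\<^sup>2) / \<bar>l\<bar>"
proof -
  define P where "P = integral {0..T} (\<lambda>t. c t * \<rho> t)"
  define C where "C = integral {0..T} (\<lambda>t. (c t)\<^sup>2)"
  define R where "R = integral {0..T} (\<lambda>t. (\<rho> t)\<^sup>2)"
  have cont_c: "continuous_on {0..T} c"
    by (rule continuous_on_vector_derivative) (use deriv in auto)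
  have int: "(\<lambda>t. c t * \<rho> t) integrable_on {0..T}" "(\<lambda>t. (c t)\<^sup>2) integrable_on {0..T}"
    "(\<lambda>t. (\<rho> t)\<^sup>2) integrable_on {0..T}"
    using cont cont_c by (auto intro!: integrable_continuous_interval continuous_intros)
  have "((\<lambda>t. (c t)\<^sup>2) has_vector_derivative (2 * (c t * \<rho> t) - (2 * l) * (c t)\<^sup>2)) (at t within {0..T})"
    if "t \<in> {0..T}" for t
    using has_vector_derivative_mult[OF deriv[OF that] deriv[OF that]]
    by (simp add: power2_eq_square algebra_simps)
  then have "((\<lambda>t. 2 * (c t * \<rho> t) - (2 * l) * (c t)\<^sup>2) has_integral ((c T)\<^sup>2 - (c 0)\<^sup>2)) {0..T}"
    by (intro fundamental_theorem_of_calculus[OF T]) auto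
  then have "integral {0..T} (\<lambda>t. 2 * (c t * \<rho> t) - (2 * l) * (c t)\<^sup>2) = (c T)\<^sup>2 - (c 0)\<^sup>2"
    by (rule integral_unique)
  moreover have "integral {0..T} (\<lambda>t. 2 * (c t * \<rho> t) - (2 * l) * (c t)\<^sup>2) = 2 * P - 2 * l * C"
    unfolding P_def C_def using int by (subst integral_diff) (auto intro: integrable_on_mult_right)
  ultimately have energy: "2 * P - 2 * l * C = (c T)\<^sup>2 - (c 0)\<^sup>2" by simp
  have am_gm: "\<bar>2 * (c t * \<rho> t)\<bar> \<le> \<bar>l\<bar> * (c t)\<^sup>2 + (\<rho> t)\<^sup>2 / \<bar>l\<bar>" for t
  proof -
    have "\<bar>l\<bar> * \<bar>2 * (c t * \<rho> t)\<bar> \<le> \<bar>l\<bar> * (\<bar>l\<bar> * (c t)\<^sup>2 + (\<rho> t)\<^sup>2 / \<bar>l\<bar>)"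
      using zero_le_power2[of "\<bar>l\<bar> * \<bar>c t\<bar> - \<bar>\<rho> t\<bar>"] l
      by (simp add: power2_eq_square algebra_simps abs_mult)
    then show ?thesis using l by simp
  qed
  have rhs: "integral {0..T} (\<lambda>t. \<bar>l\<bar> * (c t)\<^sup>2 + (\<rho> t)\<^sup>2 / \<bar>l\<bar>) = \<bar>l\<bar> * C + R / \<bar>l\<bar>"
    unfolding C_def R_def using int
    by (subst integral_add) (auto intro: integrable_on_mult_right integrable_on_mult_left simp: divide_inverse)
  have "norm (integral {0..T} (\<lambda>t. 2 * (c t * \<rho> t))) \<le> \<bar>l\<bar> * C + R / \<bar>l\<bar>"
    unfolding rhs[symmetric]
  proof (rule integral_norm_bound_integral)
    show "(\<lambda>t. 2 * (c t * \<rho> t)) integrable_on {0..T}"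
      using int(1) by (rule integrable_on_mult_right)
    show "(\<lambda>t. \<bar>l\<bar> * (c t)\<^sup>2 + (\<rho> t)\<^sup>2 / \<bar>l\<bar>) integrable_on {0..T}"
      using cont cont_c by (intro integrable_continuous_interval continuous_intros) (use l in auto)
  qed (use am_gm in simp)
  then have "\<bar>2 * P\<bar> \<le> \<bar>l\<bar> * C + R / \<bar>l\<bar>" unfolding P_def by simp
  then have P_bound: "- (\<bar>l\<bar> * C + R / \<bar>l\<bar>) \<le> 2 * P" "2 * P \<le> \<bar>l\<bar> * C + R / \<bar>l\<bar>"
    by linarith+
  have "0 \<le> (c 0)\<^sup>2" "0 \<le> (c T)\<^sup>2" by simp_all
  consider "\<bar>l\<bar> = l" | "\<bar>l\<bar> = - l" by linarith
  then have "\<bar>l\<bar> * C \<le> (c 0)\<^sup>2 + (c T)\<^sup>2 + R / \<bar>l\<bar>"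
  proof cases
    case 1
    with energy P_bound \<open>0 \<le> (c T)\<^sup>2\<close> show ?thesis by (simp only:)
  next
    case 2
    with energy P_bound \<open>0 \<le> (c 0)\<^sup>2\<close> show ?thesis by (simp only:)
  qed
  then show ?thesis unfolding C_def R_def .
qed

lemma biorthogonal_expansion:
  fixes p q :: "'n::finite \<Rightarrow> real^'n"
  assumes biorth: "\<And>i j. p i \<bullet> q j = (if i = j then 1 else 0)"
  shows "x = (\<Sum>j\<in>UNIV. (x \<bullet> p j) *\<^sub>R q j)"
proof -
  define Q :: "real^'n^'n" where "Q = (\<chi> i j. q j $ i)"
  define P :: "real^'n^'n" where "P = (\<chi> i j. p j $ i)"
  have "transpose P ** Q = mat 1"
    by (simp add: Q_def P_def matrix_matrix_mult_def transpose_def mat_def vec_eq_iff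
        biorth[unfolded inner_vec_def, symmetric])
  then have "Q ** transpose P = mat 1" by (rule matrix_left_right_inverse1)
  then have "x = (Q ** transpose P) *v x" by simp
  also have "\<dots> = Q *v (transpose P *v x)" by (simp only: matrix_vector_mul_assoc)
  also have "\<dots> = (\<Sum>j\<in>UNIV. (x \<bullet> p j) *\<^sub>R q j)"
    by (simp add: vec_eq_iff Q_def P_def matrix_vector_mult_def transpose_def inner_vec_def
        sum_component mult.commute)
  finally show ?thesis .
qed

lemma biorthogonal_inner_self_le:
  fixes p q :: "'n::finite \<Rightarrow> real^'n"
  assumes biorth: "\<And>i j. p i \<bullet> q j = (if i = j then 1 else 0)"
    and lower: "\<And>v. cmin * (v \<bullet> v) \<le> (\<Sum>i\<in>UNIV. v $ i *\<^sub>R q i) \<bullet> (\<Sum>i\<in>UNIV. v $ i *\<^sub>R q i)"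
    and cmin: "0 < cmin"
  shows "p i \<bullet> p i \<le> 1 / cmin"
proof -
  define v where "v = (\<chi> j. p i \<bullet> p j)"
  have "(\<Sum>j\<in>UNIV. v $ j *\<^sub>R q j) = p i"
    using biorthogonal_expansion[OF biorth, of "p i"] by (simp add: v_def inner_commute)
  then have "cmin * (v \<bullet> v) \<le> p i \<bullet> p i" using lower[of v] by simp
  moreover have "(p i \<bullet> p i)\<^sup>2 \<le> v \<bullet> v"
    using member_le_sum[of i UNIV "\<lambda>j. (v $ j)\<^sup>2"]
    by (simp add: v_def inner_vec_def power2_eq_square)
  ultimately have "cmin * (p i \<bullet> p i)\<^sup>2 \<le> p i \<bullet> p i"
    using cmin by (meson mult_left_mono order_trans less_imp_le)
  then show ?thesis using cmin
    by (cases "p i \<bullet> p i = 0") (auto simp: power2_eq_square field_simps)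
qed

lemma inner_self_le_biorthogonal_coefficients:
  fixes p q :: "'n::finite \<Rightarrow> real^'n"
  assumes biorth: "\<And>i j. p i \<bullet> q j = (if i = j then 1 else 0)"
    and upper: "\<And>v. (\<Sum>i\<in>UNIV. v $ i *\<^sub>R q i) \<bullet> (\<Sum>i\<in>UNIV. v $ i *\<^sub>R q i) \<le> cmax * (v \<bullet> v)"
  shows "x \<bullet> x \<le> cmax * (\<Sum>j\<in>UNIV. (x \<bullet> p j)\<^sup>2)"
proof -
  define v where "v = (\<chi> j. x \<bullet> p j)"
  have "(\<Sum>j\<in>UNIV. v $ j *\<^sub>R q j) = x"
    using biorthogonal_expansion[OF biorth, of x] by (simp add: v_def)
  then have "x \<bullet> x \<le> cmax * (v \<bullet> v)" using upper[of v] by simp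
  then show ?thesis by (simp add: v_def inner_vec_def power2_eq_square)
qed

lemma le_square_of_le_mult_sqrt:
  fixes Q B m :: real
  assumes "0 \<le> Q" and "0 < m" and "m * Q \<le> B * sqrt Q"
  shows "Q \<le> (B / m)\<^sup>2"
proof (cases "Q = 0")
  case False
  with assms(1) have "0 < sqrt Q" by simp
  moreover have "m * sqrt Q * sqrt Q \<le> B * sqrt Q" using assms by (simp add: mult.assoc)
  ultimately have "m * sqrt Q \<le> B" by simp
  then have "sqrt Q \<le> B / m" using assms(2) by (simp add: field_simps)
  then have "(sqrt Q)\<^sup>2 \<le> (B / m)\<^sup>2" by (rule power_mono) (use assms(1) in simp)
  then show ?thesis using assms(1) by simp
qed simp

definition lss_energy_bound :: "real \<Rightarrow> real \<Rightarrow> real \<Rightarrow> real \<Rightarrow> real" where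
  "lss_energy_bound M L alpha2 cmin =
     (2 * M * (1 + L + sqrt (1 / cmin) / alpha2) / min 1 (1 / alpha2))\<^sup>2"

definition lss_error_bound ::
    "real \<Rightarrow> real \<Rightarrow> real \<Rightarrow> real \<Rightarrow> real \<Rightarrow> ('n \<Rightarrow> real) \<Rightarrow> 'n \<Rightarrow> real" where
  "lss_error_bound M L alpha2 cmin cmax lam n0 =
     (let E = lss_energy_bound M L alpha2 cmin
      in cmax * (\<Sum>i\<in>UNIV. if i = n0 then E
                           else (2 * M\<^sup>2 / cmin + E / (cmin * \<bar>lam i\<bar>)) / \<bar>lam i\<bar>))"

text \<open>The difference \<open>w = \<psi>\<^sub>T - \<psi>\<^sup>\<infinity>\<close> of the adjoint LSS solution and the shadowing direction,
  together with the LSS multiplier \<open>r\<close>, on a time window \<open>[0, T]\<close>; \<open>p n0\<close> plays the role of \<open>f\<close>.\<close>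

locale lss_error =
  fixes T :: real and w r :: "real \<Rightarrow> real^'n::finite" and A :: "real \<Rightarrow> real^'n^'n"
    and p q :: "'n \<Rightarrow> real \<Rightarrow> real^'n" and lam :: "'n \<Rightarrow> real" and n0 :: 'n
    and alpha2 L cmin cmax M :: real
  assumes T_ge_1: "1 \<le> T"
    and w_deriv: "\<And>t. t \<in> {0..T} \<Longrightarrow>
          (w has_vector_derivative (r t - transpose (A t) *v w t)) (at t within {0..T})"
    and r_deriv: "\<And>t. t \<in> {0..T} \<Longrightarrow>
          (r has_vector_derivative (A t *v r t + ((1 / alpha2) * (w t \<bullet> p n0 t)) *\<^sub>R p n0 t))
            (at t within {0..T})"
    and A_bound: "\<And>t v. t \<in> {0..T} \<Longrightarrow> norm (A t *v v) \<le> L * norm v"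
    and p_deriv: "\<And>i t. t \<in> {0..T} \<Longrightarrow>
          (p i has_vector_derivative (A t *v p i t - lam i *\<^sub>R p i t)) (at t within {0..T})"
    and lam_nonzero: "\<And>i. i \<noteq> n0 \<Longrightarrow> lam i \<noteq> 0"
    and biorth: "\<And>i j t. t \<in> {0..T} \<Longrightarrow> p i t \<bullet> q j t = (if i = j then 1 else 0)"
    and gram_lower: "\<And>t v. t \<in> {0..T} \<Longrightarrow>
          cmin * (v \<bullet> v) \<le> (\<Sum>i\<in>UNIV. v $ i *\<^sub>R q i t) \<bullet> (\<Sum>i\<in>UNIV. v $ i *\<^sub>R q i t)"
    and gram_upper: "\<And>t v. t \<in> {0..T} \<Longrightarrow>
          (\<Sum>i\<in>UNIV. v $ i *\<^sub>R q i t) \<bullet> (\<Sum>i\<in>UNIV. v $ i *\<^sub>R q i t) \<le> cmax * (v \<bullet> v)"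
    and cmin_pos: "0 < cmin" and cmin_le_cmax: "cmin \<le> cmax"
    and alpha2_pos: "0 < alpha2" and L_nonneg: "0 \<le> L"
    and norm_w_0: "norm (w 0) \<le> M" and norm_w_T: "norm (w T) \<le> M"
begin

definition residual_energy :: real where
  "residual_energy = integral {0..T} (\<lambda>t. r t \<bullet> r t) + integral {0..T} (\<lambda>t. (w t \<bullet> p n0 t)\<^sup>2)"

lemma continuous_on_w: "continuous_on {0..T} w"
  by (rule continuous_on_vector_derivative) (use w_deriv in auto)

lemma continuous_on_r: "continuous_on {0..T} r"
  by (rule continuous_on_vector_derivative) (use r_deriv in auto)

lemma continuous_on_p: "continuous_on {0..T} (p i)"
  by (rule continuous_on_vector_derivative) (use p_deriv in auto)

lemma M_nonneg: "0 \<le> M"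
  using norm_w_0 norm_ge_zero order_trans by blast

lemma inner_p_self_le: "t \<in> {0..T} \<Longrightarrow> p i t \<bullet> p i t \<le> 1 / cmin"
  by (rule biorthogonal_inner_self_le[where q = "\<lambda>j. q j t"]) (use biorth gram_lower cmin_pos in auto)

lemma norm_p_le: "t \<in> {0..T} \<Longrightarrow> norm (p i t) \<le> sqrt (1 / cmin)"
  unfolding norm_eq_sqrt_inner by (simp add: inner_p_self_le real_sqrt_le_mono)

lemma square_inner_p_le:
  assumes "t \<in> {0..T}" shows "(x \<bullet> p i t)\<^sup>2 \<le> (x \<bullet> x) / cmin"
proof -
  have "(x \<bullet> p i t)\<^sup>2 \<le> (x \<bullet> x) * (p i t \<bullet> p i t)" by (rule Cauchy_Schwarz_ineq)
  also have "\<dots> \<le> (x \<bullet> x) * (1 / cmin)" by (rule mult_left_mono[OF inner_p_self_le[OF assms]]) simp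
  finally show ?thesis by simp
qed

lemma energy_identity:
  "integral {0..T} (\<lambda>t. r t \<bullet> r t) + (1 / alpha2) * integral {0..T} (\<lambda>t. (w t \<bullet> p n0 t)\<^sup>2)
     = w T \<bullet> r T - w 0 \<bullet> r 0"
proof -
  have int: "(\<lambda>t. r t \<bullet> r t) integrable_on {0..T}" "(\<lambda>t. (w t \<bullet> p n0 t)\<^sup>2) integrable_on {0..T}"
    using continuous_on_w continuous_on_r continuous_on_p
    by (auto intro!: integrable_continuous_interval continuous_intros)
  have "((\<lambda>t. w t \<bullet> r t) has_vector_derivative (r t \<bullet> r t + (1 / alpha2) * (w t \<bullet> p n0 t)\<^sup>2))
      (at t within {0..T})" if "t \<in> {0..T}" for t
  proof -
    have "((\<lambda>t. w t \<bullet> r t) has_vector_derivative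
        (w t \<bullet> (A t *v r t + ((1 / alpha2) * (w t \<bullet> p n0 t)) *\<^sub>R p n0 t)
         + (r t - transpose (A t) *v w t) \<bullet> r t)) (at t within {0..T})"
      by (rule bounded_bilinear.has_vector_derivative[OF bounded_bilinear_inner w_deriv[OF that] r_deriv[OF that]])
    moreover have "(transpose (A t) *v w t) \<bullet> r t = w t \<bullet> (A t *v r t)"
      by (simp add: dot_lmul_matrix)
    ultimately show ?thesis
      by (simp add: inner_add_right inner_diff_left inner_diff_right power2_eq_square inner_commute add.commute)
  qed
  then have "((\<lambda>t. r t \<bullet> r t + (1 / alpha2) * (w t \<bullet> p n0 t)\<^sup>2) has_integral (w T \<bullet> r T - w 0 \<bullet> r 0)) {0..T}"
    using T_ge_1 by (intro fundamental_theorem_of_calculus) auto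
  then have "integral {0..T} (\<lambda>t. r t \<bullet> r t + (1 / alpha2) * (w t \<bullet> p n0 t)\<^sup>2) = w T \<bullet> r T - w 0 \<bullet> r 0"
    by (rule integral_unique)
  moreover have "integral {0..T} (\<lambda>t. r t \<bullet> r t + (1 / alpha2) * (w t \<bullet> p n0 t)\<^sup>2)
      = integral {0..T} (\<lambda>t. r t \<bullet> r t) + (1 / alpha2) * integral {0..T} (\<lambda>t. (w t \<bullet> p n0 t)\<^sup>2)"
    using int by (subst integral_add) (auto intro: integrable_on_mult_right simp: divide_inverse)
  ultimately show ?thesis by simp
qed

lemma residual_energy_nonneg:
  "0 \<le> integral {0..T} (\<lambda>t. r t \<bullet> r t)" "0 \<le> integral {0..T} (\<lambda>t. (w t \<bullet> p n0 t)\<^sup>2)"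
  using continuous_on_w continuous_on_r continuous_on_p
  by (auto intro!: integral_nonneg integrable_continuous_interval continuous_intros)

text \<open>On a unit window \<open>r' = A r + \<alpha>\<^sup>-\<^sup>2 \<langle>w, f\<rangle> f\<close> is controlled by the \<open>L\<^sup>2\<close> norms
  of \<open>r\<close> and \<open>\<langle>w, f\<rangle>\<close>, hence so are the values of \<open>r\<close> at its ends.\<close>

lemma norm_r_endpoints_le:
  assumes sub: "{a..a + 1} \<subseteq> {0..T}"
  shows "norm (r a) \<le> (1 + L + sqrt (1 / cmin) / alpha2) * sqrt residual_energy"
    and "norm (r (a + 1)) \<le> (1 + L + sqrt (1 / cmin) / alpha2) * sqrt residual_energy"
proof -
  define F where "F = sqrt (1 / cmin)"
  define c where "c = (\<lambda>t. w t \<bullet> p n0 t)"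
  define g where "g = (\<lambda>t. L * norm (r t) + (F / alpha2) * \<bar>c t\<bar>)"
  have cont_r: "continuous_on {a..a + 1} r"
    using continuous_on_r sub by (rule continuous_on_subset)
  have cont_c: "continuous_on {a..a + 1} c"
    unfolding c_def using continuous_on_w continuous_on_p
    by (intro continuous_on_subset[OF _ sub] continuous_intros)
  have deriv: "(r has_vector_derivative (A t *v r t + ((1 / alpha2) * c t) *\<^sub>R p n0 t))
      (at t within {a..a + 1})" if "t \<in> {a..a + 1}" for t
    unfolding c_def by (rule has_vector_derivative_within_subset[OF r_deriv sub]) (use that sub in auto)
  have cont_g: "continuous_on {a..a + 1} g"
    unfolding g_def using cont_r cont_c by (intro continuous_intros)
  have bound: "norm (A t *v r t + ((1 / alpha2) * c t) *\<^sub>R p n0 t) \<le> g t" if "t \<in> {a..a + 1}" for t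
  proof -
    have t: "t \<in> {0..T}" using that sub by auto
    have "norm (((1 / alpha2) * c t) *\<^sub>R p n0 t) = (1 / alpha2) * \<bar>c t\<bar> * norm (p n0 t)"
      using alpha2_pos by (simp add: abs_mult)
    also have "\<dots> \<le> (1 / alpha2) * \<bar>c t\<bar> * F"
      unfolding F_def by (rule mult_left_mono[OF norm_p_le[OF t]]) (use alpha2_pos in simp)
    finally have "norm (((1 / alpha2) * c t) *\<^sub>R p n0 t) \<le> (F / alpha2) * \<bar>c t\<bar>"
      by (simp add: field_simps)
    then show ?thesis
      unfolding g_def using norm_triangle_ineq[of "A t *v r t" "((1 / alpha2) * c t) *\<^sub>R p n0 t"]
        A_bound[OF t, of "r t"] by linarith
  qed
  have ends: "norm (r a) \<le> integral {a..a + 1} (\<lambda>t. norm (r t)) + integral {a..a + 1} g"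
      "norm (r (a + 1)) \<le> integral {a..a + 1} (\<lambda>t. norm (r t)) + integral {a..a + 1} g"
    using norm_endpoints_le_integral[of a "a + 1" r _ g, OF _ deriv cont_g bound] by simp_all
  have int_g: "integral {a..a + 1} g
      = L * integral {a..a + 1} (\<lambda>t. norm (r t)) + (F / alpha2) * integral {a..a + 1} (\<lambda>t. \<bar>c t\<bar>)"
    unfolding g_def using cont_r cont_c alpha2_pos
    by (subst integral_add) (auto intro!: integrable_continuous_interval continuous_intros)
  have int_r: "integral {a..a + 1} (\<lambda>t. norm (r t)) \<le> sqrt residual_energy"
  proof -
    have "integral {a..a + 1} (\<lambda>t. \<bar>norm (r t)\<bar>) \<le> sqrt (integral {0..T} (\<lambda>t. (norm (r t))\<^sup>2))"
      by (rule integral_abs_le_sqrt_integral_square[OF sub])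
        (use continuous_on_r in \<open>auto intro: continuous_intros\<close>)
    also have "\<dots> \<le> sqrt residual_energy"
      unfolding residual_energy_def using residual_energy_nonneg by (simp add: power2_norm_eq_inner)
    finally show ?thesis by simp
  qed
  have int_c: "integral {a..a + 1} (\<lambda>t. \<bar>c t\<bar>) \<le> sqrt residual_energy"
  proof -
    have "integral {a..a + 1} (\<lambda>t. \<bar>c t\<bar>) \<le> sqrt (integral {0..T} (\<lambda>t. (c t)\<^sup>2))"
      by (rule integral_abs_le_sqrt_integral_square[OF sub])
        (use continuous_on_w continuous_on_p in \<open>auto simp: c_def intro: continuous_intros\<close>)
    also have "\<dots> \<le> sqrt residual_energy"
      unfolding residual_energy_def c_def using residual_energy_nonneg by simp
    finally show ?thesis .
  qed
  have "0 \<le> F / alpha2" unfolding F_def using cmin_pos alpha2_pos by simp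
  have "integral {a..a + 1} (\<lambda>t. norm (r t)) + integral {a..a + 1} g
      = (1 + L) * integral {a..a + 1} (\<lambda>t. norm (r t)) + (F / alpha2) * integral {a..a + 1} (\<lambda>t. \<bar>c t\<bar>)"
    unfolding int_g by (simp add: algebra_simps)
  also have "\<dots> \<le> (1 + L) * sqrt residual_energy + (F / alpha2) * sqrt residual_energy"
    using L_nonneg \<open>0 \<le> F / alpha2\<close> by (intro add_mono mult_left_mono int_r int_c) auto
  also have "\<dots> = (1 + L + sqrt (1 / cmin) / alpha2) * sqrt residual_energy"
    by (simp add: F_def algebra_simps)
  finally have "integral {a..a + 1} (\<lambda>t. norm (r t)) + integral {a..a + 1} g
      \<le> (1 + L + sqrt (1 / cmin) / alpha2) * sqrt residual_energy" .
  then show "norm (r a) \<le> (1 + L + sqrt (1 / cmin) / alpha2) * sqrt residual_energy"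
    and "norm (r (a + 1)) \<le> (1 + L + sqrt (1 / cmin) / alpha2) * sqrt residual_energy"
    using ends by linarith+
qed

text \<open>Pairing the energy identity with the endpoint bounds gives
  \<open>min 1 \<alpha>\<^sup>-\<^sup>2 \<cdot> E \<le> 2 M K \<surd>E\<close> for the residual energy \<open>E\<close>.\<close>

lemma residual_energy_le: "residual_energy \<le> lss_energy_bound M L alpha2 cmin"
proof -
  define K where "K = 1 + L + sqrt (1 / cmin) / alpha2"
  define m where "m = min 1 (1 / alpha2)"
  have r_ends: "norm (r 0) \<le> K * sqrt residual_energy" "norm (r T) \<le> K * sqrt residual_energy"
    using norm_r_endpoints_le(1)[of 0] norm_r_endpoints_le(2)[of "T - 1"] T_ge_1
    unfolding K_def by auto
  have "w T \<bullet> r T - w 0 \<bullet> r 0 \<le> norm (w T) * norm (r T) + norm (w 0) * norm (r 0)"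
    using norm_cauchy_schwarz[of "w T" "r T"] norm_cauchy_schwarz[of "- w 0" "r 0"] by simp
  also have "\<dots> \<le> M * (K * sqrt residual_energy) + M * (K * sqrt residual_energy)"
    using norm_w_0 norm_w_T r_ends M_nonneg by (intro add_mono mult_mono) auto
  finally have "integral {0..T} (\<lambda>t. r t \<bullet> r t) + (1 / alpha2) * integral {0..T} (\<lambda>t. (w t \<bullet> p n0 t)\<^sup>2)
      \<le> 2 * M * K * sqrt residual_energy"
    unfolding energy_identity by (simp add: mult_ac)
  moreover have "m * residual_energy
      \<le> integral {0..T} (\<lambda>t. r t \<bullet> r t) + (1 / alpha2) * integral {0..T} (\<lambda>t. (w t \<bullet> p n0 t)\<^sup>2)"
    unfolding residual_energy_def distrib_left
  proof (rule add_mono)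
    show "m * integral {0..T} (\<lambda>t. r t \<bullet> r t) \<le> integral {0..T} (\<lambda>t. r t \<bullet> r t)"
      using mult_right_mono[of m 1] residual_energy_nonneg(1) unfolding m_def by simp
    show "m * integral {0..T} (\<lambda>t. (w t \<bullet> p n0 t)\<^sup>2) \<le> 1 / alpha2 * integral {0..T} (\<lambda>t. (w t \<bullet> p n0 t)\<^sup>2)"
      using mult_right_mono[of m "1 / alpha2"] residual_energy_nonneg(2) unfolding m_def by simp
  qed
  ultimately have "m * residual_energy \<le> 2 * M * K * sqrt residual_energy" by linarith
  moreover have "0 < m" unfolding m_def using alpha2_pos by simp
  moreover have "0 \<le> residual_energy"
    unfolding residual_energy_def using residual_energy_nonneg by simp
  ultimately show ?thesis
    unfolding lss_energy_bound_def K_def[symmetric] m_def[symmetric]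
    by (intro le_square_of_le_mult_sqrt)
qed

text \<open>Each hyperbolic component \<open>\<langle>w, \<phi>\<^sub>i\<rangle>\<close> obeys \<open>c' = \<langle>r, \<phi>\<^sub>i\<rangle> - \<lambda>\<^sub>i c\<close>, so its
  \<open>L\<^sup>2\<close> norm is controlled by that of \<open>r\<close> and by the boundary values of \<open>w\<close>.\<close>

lemma hyperbolic_mode_square_integral_le:
  assumes "i \<noteq> n0"
  shows "integral {0..T} (\<lambda>t. (w t \<bullet> p i t)\<^sup>2)
           \<le> (2 * M\<^sup>2 / cmin + lss_energy_bound M L alpha2 cmin / (cmin * \<bar>lam i\<bar>)) / \<bar>lam i\<bar>"
proof -
  define E where "E = lss_energy_bound M L alpha2 cmin"
  have l: "lam i \<noteq> 0" using lam_nonzero[OF assms] .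
  have "((\<lambda>t. w t \<bullet> p i t) has_vector_derivative (r t \<bullet> p i t - lam i * (w t \<bullet> p i t)))
      (at t within {0..T})" if "t \<in> {0..T}" for t
  proof -
    have "((\<lambda>t. w t \<bullet> p i t) has_vector_derivative
        (w t \<bullet> (A t *v p i t - lam i *\<^sub>R p i t) + (r t - transpose (A t) *v w t) \<bullet> p i t))
        (at t within {0..T})"
      by (rule bounded_bilinear.has_vector_derivative[OF bounded_bilinear_inner w_deriv[OF that] p_deriv[OF that]])
    moreover have "(transpose (A t) *v w t) \<bullet> p i t = w t \<bullet> (A t *v p i t)"
      by (simp add: dot_lmul_matrix)
    ultimately show ?thesis by (simp add: inner_diff_right inner_diff_left algebra_simps)
  qed
  then have decay: "\<bar>lam i\<bar> * integral {0..T} (\<lambda>t. (w t \<bullet> p i t)\<^sup>2)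
      \<le> (w 0 \<bullet> p i 0)\<^sup>2 + (w T \<bullet> p i T)\<^sup>2 + integral {0..T} (\<lambda>t. (r t \<bullet> p i t)\<^sup>2) / \<bar>lam i\<bar>"
    using T_ge_1 continuous_on_r continuous_on_p l
    by (intro square_integral_le_of_linear_ode) (auto intro: continuous_intros)
  have ends: "(w s \<bullet> p i s)\<^sup>2 \<le> M\<^sup>2 / cmin" if "s \<in> {0, T}" for s
  proof -
    have "norm (w s) \<le> M" using that norm_w_0 norm_w_T by auto
    then have "w s \<bullet> w s \<le> M\<^sup>2" using M_nonneg by (simp add: power2_norm_eq_inner[symmetric] power_mono)
    then have "(w s \<bullet> w s) / cmin \<le> M\<^sup>2 / cmin" using cmin_pos by (simp add: divide_right_mono)
    moreover have "(w s \<bullet> p i s)\<^sup>2 \<le> (w s \<bullet> w s) / cmin"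
      using that T_ge_1 by (intro square_inner_p_le) auto
    ultimately show ?thesis by linarith
  qed
  have "integral {0..T} (\<lambda>t. (r t \<bullet> p i t)\<^sup>2) \<le> E / cmin"
  proof -
    have "integral {0..T} (\<lambda>t. (r t \<bullet> p i t)\<^sup>2) \<le> integral {0..T} (\<lambda>t. (r t \<bullet> r t) / cmin)"
      using square_inner_p_le continuous_on_r continuous_on_p cmin_pos
      by (intro integral_le) (auto intro!: integrable_continuous_interval continuous_intros)
    also have "\<dots> \<le> E / cmin"
      using residual_energy_le residual_energy_nonneg cmin_pos
      unfolding E_def residual_energy_def by (simp add: divide_right_mono)
    finally show ?thesis .
  qed
  then have "integral {0..T} (\<lambda>t. (r t \<bullet> p i t)\<^sup>2) / \<bar>lam i\<bar> \<le> E / (cmin * \<bar>lam i\<bar>)"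
    using divide_right_mono[of _ "E / cmin" "\<bar>lam i\<bar>"] by simp
  then have "\<bar>lam i\<bar> * integral {0..T} (\<lambda>t. (w t \<bullet> p i t)\<^sup>2) \<le> 2 * M\<^sup>2 / cmin + E / (cmin * \<bar>lam i\<bar>)"
    using decay ends[of 0] ends[of T] by simp
  then show ?thesis
    unfolding E_def[symmetric] using l by (simp add: field_simps)
qed

lemma square_integral_le: "integral {0..T} (\<lambda>t. w t \<bullet> w t) \<le> lss_error_bound M L alpha2 cmin cmax lam n0"
proof -
  define E where "E = lss_energy_bound M L alpha2 cmin"
  have int: "(\<lambda>t. (w t \<bullet> p j t)\<^sup>2) integrable_on {0..T}" for j
    using continuous_on_w continuous_on_p by (intro integrable_continuous_interval continuous_intros)
  have "integral {0..T} (\<lambda>t. w t \<bullet> w t) \<le> integral {0..T} (\<lambda>t. cmax * (\<Sum>j\<in>UNIV. (w t \<bullet> p j t)\<^sup>2))"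
  proof (rule integral_le)
    show "(\<lambda>t. w t \<bullet> w t) integrable_on {0..T}" "(\<lambda>t. cmax * (\<Sum>j\<in>UNIV. (w t \<bullet> p j t)\<^sup>2)) integrable_on {0..T}"
      using continuous_on_w continuous_on_p by (auto intro!: integrable_continuous_interval continuous_intros)
    show "w t \<bullet> w t \<le> cmax * (\<Sum>j\<in>UNIV. (w t \<bullet> p j t)\<^sup>2)" if "t \<in> {0..T}" for t
      by (rule inner_self_le_biorthogonal_coefficients[where q = "\<lambda>j. q j t"])
        (use biorth gram_upper that in auto)
  qed
  also have "\<dots> = cmax * (\<Sum>j\<in>UNIV. integral {0..T} (\<lambda>t. (w t \<bullet> p j t)\<^sup>2))"
    using int by (simp add: integral_sum)
  also have "\<dots> \<le> cmax * (\<Sum>j\<in>UNIV. if j = n0 then E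
                   else (2 * M\<^sup>2 / cmin + E / (cmin * \<bar>lam j\<bar>)) / \<bar>lam j\<bar>)"
  proof (intro mult_left_mono sum_mono)
    fix j
    show "integral {0..T} (\<lambda>t. (w t \<bullet> p j t)\<^sup>2) \<le> (if j = n0 then E
        else (2 * M\<^sup>2 / cmin + E / (cmin * \<bar>lam j\<bar>)) / \<bar>lam j\<bar>)"
      using residual_energy_le residual_energy_nonneg hyperbolic_mode_square_integral_le[of j]
      unfolding E_def residual_energy_def by auto
  qed (use cmin_pos cmin_le_cmax in linarith)
  finally show ?thesis unfolding lss_error_bound_def E_def Let_def .
qed

end

lemma has_vector_derivative_comp_pair:
  fixes G :: "('a::real_normed_vector \<times> real) \<Rightarrow> 'b::real_normed_vector"
  assumes G: "(G has_derivative G') (at (u t, s))"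
    and u: "(u has_vector_derivative v) (at t within S)"
  shows "((\<lambda>t. G (u t, s)) has_vector_derivative G' (v, 0)) (at t within S)"
proof -
  have "((\<lambda>t. (u t, s)) has_derivative (\<lambda>h. h *\<^sub>R (v, 0))) (at t within S)"
    using has_vector_derivative_Pair[OF u has_vector_derivative_const[of s]]
    unfolding has_vector_derivative_def .
  moreover have "(G has_derivative G') (at (u t, s) within (\<lambda>t. (u t, s)) ` S)"
    using G has_derivative_at_withinI by blast
  ultimately have "((G \<circ> (\<lambda>t. (u t, s))) has_derivative (G' \<circ> (\<lambda>h. h *\<^sub>R (v, 0)))) (at t within S)"
    by (rule diff_chain_within)
  moreover have "G' (h *\<^sub>R v, 0) = h *\<^sub>R G' (v, 0)" for h
    using linear_scale[OF has_derivative_linear[OF G], of h "(v, 0)"] by simp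
  ultimately show ?thesis
    unfolding has_vector_derivative_def by (simp add: o_def)
qed

lemma linear_first_component_eq_inner:
  fixes \<phi> :: "(real^'n) \<times> real \<Rightarrow> real"
  assumes "linear \<phi>"
  shows "\<phi> (v, 0) = (\<chi> i. \<phi> (axis i 1, 0)) \<bullet> v"
proof -
  have lin: "linear (\<lambda>h. \<phi> (h, 0))"
    by (intro linearI)
      (use linear_add[OF assms, of "(_, 0)" "(_, 0)"] linear_scale[OF assms, of _ "(_, 0)"] in simp_all)
  have "\<phi> (v, 0) = \<phi> ((\<Sum>i\<in>UNIV. v $ i *\<^sub>R axis i 1), 0)"
    using basis_expansion[of v] by (simp add: scalar_mult_eq_scaleR)
  also have "\<dots> = (\<Sum>i\<in>UNIV. v $ i *\<^sub>R \<phi> (axis i 1, 0))"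
    using linear_sum[OF lin, of "\<lambda>i. v $ i *\<^sub>R axis i 1" UNIV] linear_scale[OF lin] by simp
  also have "\<dots> = (\<chi> i. \<phi> (axis i 1, 0)) \<bullet> v"
    by (simp add: inner_vec_def mult.commute)
  finally show ?thesis .
qed

lemma C2_obtains_continuous_derivative:
  assumes "C2 g"
  obtains D where "\<And>z. (g has_derivative blinfun_apply (D z)) (at z)" and "continuous_on UNIV D"
proof -
  from assms obtain D D2 where D: "\<And>z. (g has_derivative blinfun_apply (D z)) (at z)"
      and D2: "\<And>z. (D has_derivative blinfun_apply (D2 z)) (at z)"
    unfolding C2_def by blast
  from D2 have "continuous_on UNIV D"
    by (meson differentiableI differentiable_imp_continuous_on differentiable_on_def
        has_derivative_at_withinI)
  with D show ?thesis by (rule that)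
qed

lemma pfu_mult_vector:
  assumes "((\<lambda>(y, p). f y p) has_derivative blinfun_apply D) (at (x, s))"
  shows "pfu f s x *v v = D (v, 0)"
proof -
  have "linear (\<lambda>h. blinfun_apply D (h, 0))"
    by (intro linearI) (simp_all add: blinfun.add_right[symmetric] blinfun.scaleR_right[symmetric])
  then have "Vector_Spaces.linear (*s) (*s) (\<lambda>h. blinfun_apply D (h, 0))"
    by (simp add: linear_def scalar_mult_eq_scaleR)
  then show ?thesis
    unfolding pfu_def frechet_derivative_at[OF assms, symmetric] by (rule matrix_works)
qed

lemma pfs_eq_derivative:
  assumes "((\<lambda>(y, p). f y p) has_derivative blinfun_apply D) (at (x, s))"
  shows "pfs f s x = D (0, 1)"
  unfolding pfs_def frechet_derivative_at[OF assms, symmetric] ..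

lemma C2_field_has_vector_derivative:
  assumes f: "C2 (\<lambda>(x, p). f x p)" and u: "(u has_vector_derivative v) (at t within S)"
  shows "((\<lambda>t. f (u t) s) has_vector_derivative (pfu f s (u t) *v v)) (at t within S)"
proof -
  obtain D where D: "\<And>z. ((\<lambda>(x, p). f x p) has_derivative blinfun_apply (D z)) (at z)"
    using C2_obtains_continuous_derivative[OF f] by blast
  show ?thesis
    using has_vector_derivative_comp_pair[OF D u] by (simp add: pfu_mult_vector[OF D])
qed

lemma C2_continuous_on_pfs:
  assumes f: "C2 (\<lambda>(x, p). f x p)" and u: "continuous_on S u"
  shows "continuous_on S (\<lambda>t. pfs f s (u t))"
proof -
  obtain D where D: "\<And>z. ((\<lambda>(x, p). f x p) has_derivative blinfun_apply (D z)) (at z)"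
    and cont: "continuous_on UNIV D"
    using C2_obtains_continuous_derivative[OF f] by blast
  have "continuous_on S (\<lambda>t. (u t, s))" using u by (intro continuous_intros)
  then have "continuous_on S (\<lambda>t. D (u t, s))"
    using continuous_on_compose2[OF cont] by simp
  then show ?thesis
    by (simp add: pfs_eq_derivative[OF D] continuous_intros)
qed

lemma C2_pfu_bounded:
  assumes f: "C2 (\<lambda>(x, p). f x p)" and K: "compact K"
  obtains L where "0 \<le> L" and "\<And>x v. x \<in> K \<Longrightarrow> norm (pfu f s x *v v) \<le> L * norm v"
proof -
  obtain D where D: "\<And>z. ((\<lambda>(x, p). f x p) has_derivative blinfun_apply (D z)) (at z)"
    and cont: "continuous_on UNIV D"
    using C2_obtains_continuous_derivative[OF f] by blast
  have "compact (D ` (\<lambda>x. (x, s)) ` K)"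
    using K cont by (intro compact_continuous_image continuous_intros) (auto elim: continuous_on_subset)
  then obtain B where B: "\<And>x. x \<in> K \<Longrightarrow> norm (D (x, s)) \<le> B"
    using compact_imp_bounded bounded_iff by (metis image_eqI)
  show ?thesis
  proof (rule that[of "max B 0"])
    fix x v assume "x \<in> K"
    have "norm (pfu f s x *v v) \<le> norm (D (x, s)) * norm (v, 0::real)"
      unfolding pfu_mult_vector[OF D] by (rule norm_blinfun)
    also have "\<dots> \<le> max B 0 * norm v"
      using B[OF \<open>x \<in> K\<close>] by (simp add: mult_right_mono)
    finally show "norm (pfu f s x *v v) \<le> max B 0 * norm v" .
  qed simp
qed

lemma smooth_output_has_vector_derivative:
  assumes J: "smooth (\<lambda>(x, p). J x p)" and u: "(u has_vector_derivative v) (at t within S)"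
  shows "((\<lambda>t. J (u t) s) has_vector_derivative (pJu J s (u t) \<bullet> v)) (at t within S)"
proof -
  let ?J = "\<lambda>(x, p). J x p"
  have "?J differentiable (at z)" for z
    using J unfolding smooth_def by (metis dder.simps(1))
  then have D: "(?J has_derivative frechet_derivative ?J (at z)) (at z)" for z
    using frechet_derivative_works by blast
  have "frechet_derivative ?J (at (u t, s)) (v, 0) = pJu J s (u t) \<bullet> v"
    unfolding pJu_def by (rule linear_first_component_eq_inner) (use D has_derivative_linear in blast)
  then show ?thesis
    using has_vector_derivative_comp_pair[OF D[of "(u t, s)"] u] by simp
qed

lemma smooth_continuous_on_pJs:
  assumes J: "smooth (\<lambda>(x, p). J x p)" and u: "continuous_on S u"
  shows "continuous_on S (\<lambda>t. pJs J s (u t))"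
proof -
  have "dder (\<lambda>(x, p). J x p) [(0, 1)] differentiable (at z)" for z
    using J unfolding smooth_def by blast
  then have "continuous_on UNIV (dder (\<lambda>(x, p). J x p) [(0, 1)])"
    by (meson continuous_at_imp_continuous_on differentiable_imp_continuous_within)
  moreover have "continuous_on S (\<lambda>t. (u t, s))" using u by (intro continuous_intros)
  ultimately show ?thesis
    unfolding pJs_def using continuous_on_compose2 by fastforce
qed

text \<open>Along the trajectory \<open>\<psi>\<^sup>\<infinity> \<bullet> f + J\<close> has derivative zero, and averaging the constant
  identifies it as \<open>J\<^sub>b\<^sub>a\<^sub>r\<close>.\<close>

lemma adjoint_shadowing_conservation:
  fixes psi f a :: "real \<Rightarrow> real^'n" and A :: "real \<Rightarrow> real^'n^'n" and j :: "real \<Rightarrow> real"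
  assumes psi: "\<And>t. t \<ge> 0 \<Longrightarrow>
        (psi has_vector_derivative (- (transpose (A t) *v psi t) - a t)) (at t within {0..})"
    and f: "\<And>t. t \<ge> 0 \<Longrightarrow> (f has_vector_derivative (A t *v f t)) (at t within {0..})"
    and j: "\<And>t. t \<ge> 0 \<Longrightarrow> (j has_vector_derivative (a t \<bullet> f t)) (at t within {0..})"
    and j_mean: "((\<lambda>T. (1 / T) * integral {0..T} j) \<longlongrightarrow> jbar) at_top"
    and psi_mean: "((\<lambda>T. (1 / T) * integral {0..T} (\<lambda>t. psi t \<bullet> f t)) \<longlongrightarrow> 0) at_top"
    and t: "t \<ge> 0"
  shows "psi t \<bullet> f t + j t = jbar"
proof -
  obtain C where C: "\<And>t. t \<ge> 0 \<Longrightarrow> psi t \<bullet> f t + j t = C"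
  proof -
    have "\<exists>C. \<forall>t\<in>{0..}. psi t \<bullet> f t + j t = C"
    proof (rule has_derivative_zero_constant)
      fix t :: real assume "t \<in> {0..}"
      then have t: "t \<ge> 0" by simp
      have "((\<lambda>t. psi t \<bullet> f t + j t) has_vector_derivative
          (psi t \<bullet> (A t *v f t) + (- (transpose (A t) *v psi t) - a t) \<bullet> f t + a t \<bullet> f t))
          (at t within {0..})"
        by (intro has_vector_derivative_add bounded_bilinear.has_vector_derivative[OF bounded_bilinear_inner]
            psi[OF t] f[OF t] j[OF t])
      moreover have "(transpose (A t) *v psi t) \<bullet> f t = psi t \<bullet> (A t *v f t)"
        by (simp add: dot_lmul_matrix)
      ultimately have "((\<lambda>t. psi t \<bullet> f t + j t) has_vector_derivative 0) (at t within {0..})"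
        by (simp add: inner_diff_left)
      then show "((\<lambda>t. psi t \<bullet> f t + j t) has_derivative (\<lambda>h. 0)) (at t within {0..})"
        by (simp add: has_vector_derivative_def)
    qed (rule convex_real_interval)
    then show ?thesis using that by auto
  qed
  have "continuous_on {0..} j"
    by (rule continuous_on_vector_derivative) (use j in auto)
  then have j_int: "j integrable_on {0..T}" for T
    by (intro integrable_continuous_interval) (auto elim: continuous_on_subset)
  have avg: "\<forall>\<^sub>F T in at_top. (1 / T) * integral {0..T} (\<lambda>t. psi t \<bullet> f t) = C - (1 / T) * integral {0..T} j"
    using eventually_gt_at_top[of "0::real"]
  proof eventually_elim
    case (elim T)
    have "integral {0..T} (\<lambda>t. psi t \<bullet> f t) = integral {0..T} (\<lambda>t. C - j t)"
      by (rule integral_cong) (use C in \<open>auto simp: algebra_simps\<close>)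
    also have "\<dots> = T * C - integral {0..T} j"
      using j_int elim by (subst integral_diff) auto
    finally show ?case using elim by (simp add: field_simps)
  qed
  have "((\<lambda>T. C - (1 / T) * integral {0..T} j) \<longlongrightarrow> C - jbar) at_top"
    by (intro tendsto_intros j_mean)
  then have "((\<lambda>T. (1 / T) * integral {0..T} (\<lambda>t. psi t \<bullet> f t)) \<longlongrightarrow> C - jbar) at_top"
    by (rule Lim_transform_eventually) (use avg in \<open>auto elim: eventually_mono\<close>)
  with psi_mean have "C = jbar"
    using tendsto_unique[OF trivial_limit_at_top_linorder] by fastforce
  with C[OF t] show ?thesis by simp
qed

lemma norm_eA_eB_le:
  assumes T: "1 \<le> T" and M: "\<And>t. t \<ge> 0 \<Longrightarrow> norm (psiinf t) \<le> M"
  shows "norm (eA psiinf T) \<le> 2 * M / (1 - exp (- 2))"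
    and "norm (eB psiinf T) \<le> 2 * M / (1 - exp (- 2))"
proof -
  have M0: "0 \<le> M" using M[of 0] norm_ge_zero order_trans by blast
  have pos: "0 < 1 - exp (- 2 * T)" using T by simp
  have "1 / (1 - exp (- 2 * T)) \<le> 1 / (1 - exp (- 2))"
    using T by (intro divide_left_mono) auto
  then have scale: "1 / (1 - exp (- 2 * T)) * (2 * M) \<le> 2 * M / (1 - exp (- 2))"
    using mult_right_mono[of _ _ "2 * M"] M0 by fastforce
  have combo: "norm (x - exp (- T) *\<^sub>R y) \<le> 2 * M" if "norm x \<le> M" "norm y \<le> M" for x y :: "real^'n"
  proof -
    have "norm (x - exp (- T) *\<^sub>R y) \<le> norm x + exp (- T) * norm y"
      using norm_triangle_ineq4[of x "exp (- T) *\<^sub>R y"] by simp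
    also have "\<dots> \<le> M + 1 * M"
      using that T by (intro add_mono mult_mono) auto
    finally show ?thesis by simp
  qed
  have "norm ((- psiinf 0) - exp (- T) *\<^sub>R (- psiinf T)) \<le> 2 * M"
    and "norm ((- psiinf T) - exp (- T) *\<^sub>R (- psiinf 0)) \<le> 2 * M"
    using M[of 0] M[of T] T by (intro combo; simp)+
  moreover have "norm ((1 / (1 - exp (- 2 * T))) *\<^sub>R z) \<le> 2 * M / (1 - exp (- 2))"
    if "norm z \<le> 2 * M" for z :: "real^'n"
  proof -
    have "norm ((1 / (1 - exp (- 2 * T))) *\<^sub>R z) = 1 / (1 - exp (- 2 * T)) * norm z"
      using pos by simp
    also have "\<dots> \<le> 1 / (1 - exp (- 2 * T)) * (2 * M)"
      by (rule mult_left_mono[OF that]) (use pos in simp)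
    finally show ?thesis using scale by linarith
  qed
  ultimately show "norm (eA psiinf T) \<le> 2 * M / (1 - exp (- 2))"
    and "norm (eB psiinf T) \<le> 2 * M / (1 - exp (- 2))"
    unfolding eA_def eB_def by blast+
qed

lemma norm_ep_le:
  assumes "1 \<le> T" and "\<And>t. t \<ge> 0 \<Longrightarrow> norm (psiinf t) \<le> M"
  shows "norm (ep psiinf T t) \<le> 2 * M / (1 - exp (- 2)) * (exp (- t) + exp (- (T - t)))"
proof -
  define B where "B = 2 * M / (1 - exp (- 2))"
  have "norm (ep psiinf T t) \<le> exp (- t) * norm (eA psiinf T) + exp (- (T - t)) * norm (eB psiinf T)"
    unfolding ep_def
    using norm_triangle_ineq[of "exp (- t) *\<^sub>R eA psiinf T" "exp (- (T - t)) *\<^sub>R eB psiinf T"] by simp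
  also have "\<dots> \<le> exp (- t) * B + exp (- (T - t)) * B"
    using norm_eA_eB_le[OF assms] unfolding B_def by (intro add_mono mult_left_mono) auto
  finally show ?thesis unfolding B_def[symmetric] by (simp add: algebra_simps)
qed

lemma integral_exp_both_ends_le:
  fixes T :: real
  assumes "0 \<le> T"
  shows "integral {0..T} (\<lambda>t. exp (- t) + exp (- (T - t))) \<le> 2"
proof -
  have "((\<lambda>t. exp (- t) + exp (- (T - t))) has_integral
      ((- exp (- T) + exp (- (T - T))) - (- exp (- 0) + exp (- (T - 0))))) {0..T}"
  proof (rule fundamental_theorem_of_calculus[OF assms])
    fix t assume "t \<in> {0..T}"
    show "((\<lambda>t. - exp (- t) + exp (- (T - t))) has_vector_derivative (exp (- t) + exp (- (T - t))))
        (at t within {0..T})"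
      unfolding has_real_derivative_iff_has_vector_derivative[symmetric]
      by (auto intro!: derivative_eq_intros)
  qed
  then show ?thesis by (simp add: integral_unique)
qed

lemma integral_norm_ep_le:
  assumes T: "1 \<le> T" and M: "\<And>t. t \<ge> 0 \<Longrightarrow> norm (psiinf t) \<le> M"
  shows "integral {0..T} (\<lambda>t. norm (ep psiinf T t)) \<le> 4 * M / (1 - exp (- 2))"
proof -
  define B where "B = 2 * M / (1 - exp (- 2))"
  have "0 \<le> M" using M[of 0] norm_ge_zero order_trans by blast
  then have "0 \<le> B" unfolding B_def by simp
  have "integral {0..T} (\<lambda>t. norm (ep psiinf T t)) \<le> integral {0..T} (\<lambda>t. B * (exp (- t) + exp (- (T - t))))"
    using norm_ep_le[OF T M] unfolding B_def ep_def
    by (intro integral_le) (auto intro!: integrable_continuous_interval continuous_intros)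
  also have "\<dots> = B * integral {0..T} (\<lambda>t. exp (- t) + exp (- (T - t)))" by simp
  also have "\<dots> \<le> B * 2"
    by (rule mult_left_mono[OF integral_exp_both_ends_le \<open>0 \<le> B\<close>]) (use T in simp)
  finally show ?thesis unfolding B_def by simp
qed

lemma integral_inner_ep_le:
  assumes T: "1 \<le> T" and M: "\<And>t. t \<ge> 0 \<Longrightarrow> norm (psiinf t) \<le> M"
  shows "integral {0..T} (\<lambda>t. ep psiinf T t \<bullet> ep psiinf T t) \<le> 4 * (2 * M / (1 - exp (- 2)))\<^sup>2"
proof -
  define B where "B = 2 * M / (1 - exp (- 2))"
  have "integral {0..T} (\<lambda>t. ep psiinf T t \<bullet> ep psiinf T t)
      \<le> integral {0..T} (\<lambda>t. 2 * B\<^sup>2 * (exp (- t) + exp (- (T - t))))"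
  proof (rule integral_le)
    show "(\<lambda>t. ep psiinf T t \<bullet> ep psiinf T t) integrable_on {0..T}"
      "(\<lambda>t. 2 * B\<^sup>2 * (exp (- t) + exp (- (T - t)))) integrable_on {0..T}"
      unfolding ep_def by (auto intro!: integrable_continuous_interval continuous_intros)
    fix t assume "t \<in> {0..T}"
    define h where "h = exp (- t) + exp (- (T - t))"
    have "exp (- t) \<le> 1" "exp (- (T - t)) \<le> 1" using \<open>t \<in> {0..T}\<close> by auto
    then have "h \<le> 2" unfolding h_def by linarith
    have "0 \<le> h" unfolding h_def by (simp add: add_nonneg_nonneg)
    have "ep psiinf T t \<bullet> ep psiinf T t = (norm (ep psiinf T t))\<^sup>2" by (simp add: power2_norm_eq_inner)
    also have "\<dots> \<le> (B * h)\<^sup>2"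
      unfolding B_def h_def by (rule power_mono[OF norm_ep_le[OF T M] norm_ge_zero])
    also have "\<dots> = B\<^sup>2 * (h * h)" by (simp add: power2_eq_square)
    also have "\<dots> \<le> B\<^sup>2 * (2 * h)"
      using \<open>0 \<le> h\<close> \<open>h \<le> 2\<close> by (intro mult_left_mono mult_right_mono) auto
    finally show "ep psiinf T t \<bullet> ep psiinf T t \<le> 2 * B\<^sup>2 * (exp (- t) + exp (- (T - t)))"
      unfolding h_def by (simp add: algebra_simps)
  qed
  also have "\<dots> = 2 * B\<^sup>2 * integral {0..T} (\<lambda>t. exp (- t) + exp (- (T - t)))" by simp
  also have "\<dots> \<le> 2 * B\<^sup>2 * 2"
    by (rule mult_left_mono[OF integral_exp_both_ends_le]) (use T in simp_all)
  finally show ?thesis unfolding B_def by simp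
qed

lemma integral_inner_self_nonneg:
  fixes g :: "real \<Rightarrow> real^'n"
  assumes "continuous_on {0..T} g"
  shows "0 \<le> integral {0..T} (\<lambda>t. g t \<bullet> g t)"
  by (rule integral_nonneg) (use assms in \<open>auto intro!: integrable_continuous_interval continuous_intros\<close>)

lemma integral_norm_le_sqrt_L2norm:
  fixes g :: "real \<Rightarrow> real^'n"
  assumes T: "0 \<le> T" and cont: "continuous_on {0..T} g"
  shows "integral {0..T} (\<lambda>t. norm (g t)) \<le> sqrt T * L2norm T g"
proof (rule power2_le_imp_le)
  have "(integral {0..T} (\<lambda>t. norm (g t)))\<^sup>2 \<le> (T - 0) * integral {0..T} (\<lambda>t. (norm (g t))\<^sup>2)"
    by (rule square_integral_le) (use T cont in \<open>auto intro: continuous_intros\<close>)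
  also have "\<dots> = (sqrt T)\<^sup>2 * (sqrt (integral {0..T} (\<lambda>t. g t \<bullet> g t)))\<^sup>2"
    using T integral_inner_self_nonneg[OF cont] by (simp add: power2_norm_eq_inner)
  finally show "(integral {0..T} (\<lambda>t. norm (g t)))\<^sup>2 \<le> (sqrt T * L2norm T g)\<^sup>2"
    unfolding L2norm_def power_mult_distrib .
  show "0 \<le> sqrt T * L2norm T g"
    unfolding L2norm_def using T integral_inner_self_nonneg[OF cont] by simp
qed

lemma L2norm_diff_le:
  fixes x y :: "real \<Rightarrow> real^'n"
  assumes "continuous_on {0..T} x" and "continuous_on {0..T} y"
  shows "L2norm T (\<lambda>t. x t - y t)
           \<le> sqrt (2 * integral {0..T} (\<lambda>t. x t \<bullet> x t) + 2 * integral {0..T} (\<lambda>t. y t \<bullet> y t))"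
proof -
  have "integral {0..T} (\<lambda>t. (x t - y t) \<bullet> (x t - y t))
      \<le> integral {0..T} (\<lambda>t. 2 * (x t \<bullet> x t) + 2 * (y t \<bullet> y t))"
  proof (rule integral_le)
    show "(\<lambda>t. (x t - y t) \<bullet> (x t - y t)) integrable_on {0..T}"
      "(\<lambda>t. 2 * (x t \<bullet> x t) + 2 * (y t \<bullet> y t)) integrable_on {0..T}"
      using assms by (auto intro!: integrable_continuous_interval continuous_intros)
    show "(x t - y t) \<bullet> (x t - y t) \<le> 2 * (x t \<bullet> x t) + 2 * (y t \<bullet> y t)" for t
      using inner_ge_zero[of "x t + y t"]
      by (simp add: inner_add_left inner_add_right inner_diff_left inner_diff_right inner_commute)
  qed
  also have "\<dots> = 2 * integral {0..T} (\<lambda>t. x t \<bullet> x t) + 2 * integral {0..T} (\<lambda>t. y t \<bullet> y t)"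
    using assms by (subst integral_add) (auto intro!: integrable_continuous_interval continuous_intros)
  finally show ?thesis unfolding L2norm_def by simp
qed

lemma abs_integral_inner_le:
  fixes g h :: "real \<Rightarrow> real^'n"
  assumes "continuous_on {0..T} g" and "continuous_on {0..T} h"
    and bound: "\<And>t. t \<in> {0..T} \<Longrightarrow> norm (h t) \<le> S"
  shows "\<bar>integral {0..T} (\<lambda>t. g t \<bullet> h t)\<bar> \<le> S * integral {0..T} (\<lambda>t. norm (g t))"
proof -
  have "norm (integral {0..T} (\<lambda>t. g t \<bullet> h t)) \<le> integral {0..T} (\<lambda>t. S * norm (g t))"
  proof (rule integral_norm_bound_integral)
    show "(\<lambda>t. g t \<bullet> h t) integrable_on {0..T}" "(\<lambda>t. S * norm (g t)) integrable_on {0..T}"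
      using assms by (auto intro!: integrable_continuous_interval continuous_intros)
    fix t assume "t \<in> {0..T}"
    have "norm (g t \<bullet> h t) \<le> norm (g t) * norm (h t)"
      using Cauchy_Schwarz_ineq2 by simp
    also have "\<dots> \<le> norm (g t) * S" by (rule mult_left_mono[OF bound[OF \<open>t \<in> {0..T}\<close>]]) simp
    finally show "norm (g t \<bullet> h t) \<le> S * norm (g t)" by (simp add: mult.commute)
  qed
  then show ?thesis by simp
qed

text \<open>Replacing \<open>\<psi>\<^sup>\<infinity>\<close> by \<open>\<psi>\<^sub>T = \<psi>\<^sup>\<infinity> + e\<^sub>h + e\<^sub>p\<close> perturbs the windowed sensitivity by
  \<open>T\<^sup>-\<^sup>1 \<integral> (e\<^sub>h + e\<^sub>p) \<bullet> f\<^sub>s\<close>; Cauchy-Schwarz bounds the \<open>e\<^sub>h\<close> part by \<open>\<parallel>e\<^sub>h\<parallel>\<^sub>2 \<surd>T\<close>.\<close>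

lemma sensitivity_error_le:
  fixes Js :: "real \<Rightarrow> real" and fs psiinf :: "real \<Rightarrow> real^'n" and psiT :: "real \<Rightarrow> real \<Rightarrow> real^'n"
  assumes T: "0 < T"
    and cont: "continuous_on {0..T} Js" "continuous_on {0..T} fs"
      "continuous_on {0..T} (psiT T)" "continuous_on {0..T} psiinf"
    and fs_bound: "\<And>t. t \<in> {0..T} \<Longrightarrow> norm (fs t) \<le> S"
  shows "\<bar>(1 / T) * integral {0..T} (\<lambda>t. Js t + psiT T t \<bullet> fs t) - d\<bar>
           \<le> L2norm T (eh psiT psiinf T) * S / sqrt T
              + S * integral {0..T} (\<lambda>t. norm (ep psiinf T t)) / T
              + \<bar>(1 / T) * integral {0..T} (\<lambda>t. Js t + psiinf t \<bullet> fs t) - d\<bar>"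
proof -
  let ?eh = "eh psiT psiinf T" and ?ep = "ep psiinf T"
  let ?a = "(1 / T) * integral {0..T} (\<lambda>t. Js t + psiinf t \<bullet> fs t) - d"
  have cont_ep: "continuous_on {0..T} ?ep" unfolding ep_def by (intro continuous_intros)
  have cont_eh: "continuous_on {0..T} ?eh" unfolding eh_def using cont cont_ep by (intro continuous_intros)
  have int: "(\<lambda>t. Js t + psiT T t \<bullet> fs t) integrable_on {0..T}"
    "(\<lambda>t. Js t + psiinf t \<bullet> fs t) integrable_on {0..T}"
    "(\<lambda>t. ?eh t \<bullet> fs t) integrable_on {0..T}" "(\<lambda>t. ?ep t \<bullet> fs t) integrable_on {0..T}"
    using cont cont_ep cont_eh by (auto intro!: integrable_continuous_interval continuous_intros)
  have "integral {0..T} (\<lambda>t. Js t + psiT T t \<bullet> fs t)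
      = integral {0..T} (\<lambda>t. (Js t + psiinf t \<bullet> fs t) + (?eh t \<bullet> fs t + ?ep t \<bullet> fs t))"
    by (rule integral_cong) (simp add: eh_def inner_diff_left)
  also have "\<dots> = integral {0..T} (\<lambda>t. Js t + psiinf t \<bullet> fs t)
      + (integral {0..T} (\<lambda>t. ?eh t \<bullet> fs t) + integral {0..T} (\<lambda>t. ?ep t \<bullet> fs t))"
    using int by (simp add: integral_add integrable_add)
  finally have "(1 / T) * integral {0..T} (\<lambda>t. Js t + psiT T t \<bullet> fs t) - d
      = ?a + (1 / T) * (integral {0..T} (\<lambda>t. ?eh t \<bullet> fs t) + integral {0..T} (\<lambda>t. ?ep t \<bullet> fs t))"
    by (simp only: distrib_left diff_add_eq)
  then have "\<bar>(1 / T) * integral {0..T} (\<lambda>t. Js t + psiT T t \<bullet> fs t) - d\<bar>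
      = \<bar>?a + (1 / T) * (integral {0..T} (\<lambda>t. ?eh t \<bullet> fs t) + integral {0..T} (\<lambda>t. ?ep t \<bullet> fs t))\<bar>"
    by (rule arg_cong)
  also have "\<dots> \<le> \<bar>?a\<bar> + (1 / T) * (\<bar>integral {0..T} (\<lambda>t. ?eh t \<bullet> fs t)\<bar>
      + \<bar>integral {0..T} (\<lambda>t. ?ep t \<bullet> fs t)\<bar>)"
  proof -
    let ?x = "integral {0..T} (\<lambda>t. ?eh t \<bullet> fs t)" and ?y = "integral {0..T} (\<lambda>t. ?ep t \<bullet> fs t)"
    have "\<bar>(1 / T) * (?x + ?y)\<bar> = (1 / T) * \<bar>?x + ?y\<bar>" using T by (simp add: abs_mult)
    also have "\<dots> \<le> (1 / T) * (\<bar>?x\<bar> + \<bar>?y\<bar>)"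
      by (rule mult_left_mono[OF abs_triangle_ineq]) (use T in simp)
    finally show ?thesis using abs_triangle_ineq[of ?a "(1 / T) * (?x + ?y)"] by linarith
  qed
  also have "\<dots> \<le> \<bar>?a\<bar> + (1 / T) * (S * (sqrt T * L2norm T ?eh) + S * integral {0..T} (\<lambda>t. norm (?ep t)))"
  proof -
    have "norm (fs 0) \<le> S" using T by (intro fs_bound) simp
    then have "0 \<le> S" using norm_ge_zero[of "fs 0"] by linarith
    have "\<bar>integral {0..T} (\<lambda>t. ?eh t \<bullet> fs t)\<bar> \<le> S * integral {0..T} (\<lambda>t. norm (?eh t))"
      by (rule abs_integral_inner_le[OF cont_eh cont(2) fs_bound])
    also have "\<dots> \<le> S * (sqrt T * L2norm T ?eh)"
      by (rule mult_left_mono[OF integral_norm_le_sqrt_L2norm[OF _ cont_eh] \<open>0 \<le> S\<close>]) (use T in simp)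
    finally have "\<bar>integral {0..T} (\<lambda>t. ?eh t \<bullet> fs t)\<bar> \<le> S * (sqrt T * L2norm T ?eh)" .
    moreover have "\<bar>integral {0..T} (\<lambda>t. ?ep t \<bullet> fs t)\<bar> \<le> S * integral {0..T} (\<lambda>t. norm (?ep t))"
      by (rule abs_integral_inner_le[OF cont_ep cont(2) fs_bound])
    ultimately show ?thesis using T by (intro add_left_mono mult_left_mono add_mono) simp_all
  qed
  also have "\<dots> = L2norm T ?eh * S / sqrt T + S * integral {0..T} (\<lambda>t. norm (?ep t)) / T + \<bar>?a\<bar>"
  proof -
    have "(1 / T) * (S * (sqrt T * L2norm T ?eh)) = (1 / (sqrt T * sqrt T)) * (S * (sqrt T * L2norm T ?eh))"
      using T by simp
    also have "\<dots> = L2norm T ?eh * S / sqrt T"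
      using T by (simp add: field_simps)
    finally have "(1 / T) * (S * (sqrt T * L2norm T ?eh)) = L2norm T ?eh * S / sqrt T" .
    moreover have "(1 / T) * (S * integral {0..T} (\<lambda>t. norm (?ep t))) = S * integral {0..T} (\<lambda>t. norm (?ep t)) / T"
      by simp
    ultimately show ?thesis by (simp only: distrib_left add.assoc)
  qed
  finally show ?thesis .
qed

lemma L2norm_eh_le:
  fixes psiT :: "real \<Rightarrow> real \<Rightarrow> real^'n::finite" and psiinf :: "real \<Rightarrow> real^'n"
  assumes lss: "lss_error T (\<lambda>t. psiT T t - psiinf t) r A p q lam n0 alpha2 L cmin cmax M"
    and M: "\<And>t. t \<ge> 0 \<Longrightarrow> norm (psiinf t) \<le> M"
  shows "L2norm T (eh psiT psiinf T)
           \<le> sqrt (2 * lss_error_bound M L alpha2 cmin cmax lam n0 + 8 * (2 * M / (1 - exp (- 2)))\<^sup>2)"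
proof -
  have T: "1 \<le> T" using lss by (rule lss_error.T_ge_1)
  have "eh psiT psiinf T = (\<lambda>t. (psiT T t - psiinf t) - ep psiinf T t)"
    unfolding eh_def by auto
  moreover have "continuous_on {0..T} (ep psiinf T)" unfolding ep_def by (intro continuous_intros)
  ultimately have "L2norm T (eh psiT psiinf T)
      \<le> sqrt (2 * integral {0..T} (\<lambda>t. (psiT T t - psiinf t) \<bullet> (psiT T t - psiinf t))
             + 2 * integral {0..T} (\<lambda>t. ep psiinf T t \<bullet> ep psiinf T t))"
    using lss_error.continuous_on_w[OF lss] by (simp add: L2norm_diff_le)
  also have "\<dots> \<le> sqrt (2 * lss_error_bound M L alpha2 cmin cmax lam n0 + 8 * (2 * M / (1 - exp (- 2)))\<^sup>2)"
    using lss_error.square_integral_le[OF lss] integral_inner_ep_le[where psiinf = psiinf, OF T M]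
    by (intro real_sqrt_le_mono) linarith
  finally show ?thesis .
qed

lemma bigo_inverse_sqrt_of_le:
  fixes a b1 b2 g :: "real \<Rightarrow> real"
  assumes le: "\<forall>\<^sub>F T in at_top. a T \<le> b1 T / sqrt T + b2 T / T + g T"
    and nonneg: "\<forall>\<^sub>F T in at_top. 0 \<le> a T"
    and b1: "\<forall>\<^sub>F T in at_top. b1 T \<le> B1" and b2: "\<forall>\<^sub>F T in at_top. b2 T \<le> B2"
    and g: "g \<in> O[at_top](\<lambda>T. 1 / sqrt T)"
  shows "a \<in> O[at_top](\<lambda>T. 1 / sqrt T)"
proof -
  have "(\<lambda>T. 1 / T) \<in> O[at_top](\<lambda>T. 1 / sqrt (T::real))" by real_asymp
  then have "(\<lambda>T. B1 / sqrt T + B2 / T + g T) \<in> O[at_top](\<lambda>T. 1 / sqrt T)"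
    using g by (intro sum_in_bigo) (auto simp: divide_inverse landau_o.big.mult_left)
  moreover have "\<forall>\<^sub>F T in at_top. norm (a T) \<le> norm (B1 / sqrt T + B2 / T + g T)"
    using le nonneg b1 b2 eventually_gt_at_top[of 0]
  proof eventually_elim
    case (elim T)
    then have "b1 T / sqrt T \<le> B1 / sqrt T" "b2 T / T \<le> B2 / T"
      by (simp_all add: divide_right_mono)
    with elim show ?case by simp
  qed
  then have "a \<in> O[at_top](\<lambda>T. B1 / sqrt T + B2 / T + g T)"
    by (rule landau_o.big_mono)
  ultimately show ?thesis by (rule landau_o.big_trans[rotated])
qed

theorem mainTheorem9:
  fixes f :: "real^'n \<Rightarrow> real \<Rightarrow> real^'n"
    and J :: "real^'n \<Rightarrow> real \<Rightarrow> real"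
    and s :: real
    and u :: "real \<Rightarrow> real^'n"
    and K :: "(real^'n) set"
    and Jbar :: real
    and Jbarfun :: "real \<Rightarrow> real"
    and dJds :: real
    and alpha2 :: real
    and lam :: "'n \<Rightarrow> real"
    and n0 :: 'n
    and phi phih :: "'n \<Rightarrow> real \<Rightarrow> real^'n"
    and cmin cmax :: real
    and psiT rT :: "real \<Rightarrow> real \<Rightarrow> real^'n"
    and psiinf :: "real \<Rightarrow> real^'n"
  defines "fu \<equiv> \<lambda>t. pfu f s (u t)"
    and "fs \<equiv> \<lambda>t. pfs f s (u t)"
    and "ft \<equiv> \<lambda>t. f (u t) s"
    and "Jt \<equiv> \<lambda>t. J (u t) s"
    and "Ju \<equiv> \<lambda>t. pJu J s (u t)"
    and "Js \<equiv> \<lambda>t. pJs J s (u t)"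
  assumes f_C2: "C2 (\<lambda>(x, p). f x p)"
    and J_smooth: "smooth (\<lambda>(x, p). J x p)"
    (* the trajectory *)
    and u_ode: "\<And>t. t \<ge> 0 \<Longrightarrow> (u has_vector_derivative f (u t) s) (at t within {0..})"
    and K_compact: "compact K"
    and u_in_K: "\<And>t. t \<ge> 0 \<Longrightarrow> u t \<in> K"
    (* long-time average and its derivative *)
    and Jbar_lim: "((\<lambda>T. (1 / T) * integral {0..T} Jt) \<longlongrightarrow> Jbar) at_top"
    and Jbarfun_s: "Jbarfun s = Jbar"
    and Jbar_deriv: "(Jbarfun has_real_derivative dJds) (at s)"
    and alpha_pos: "alpha2 > 0"
    (* uniform hyperbolicity *)
    and lam_n0: "lam n0 = 0"
    and lam_nz: "\<And>i. i \<noteq> n0 \<Longrightarrow> lam i \<noteq> 0"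
    and phi_ode: "\<And>i t. t \<ge> 0 \<Longrightarrow>
         (phi i has_vector_derivative (fu t *v phi i t - lam i *\<^sub>R phi i t)) (at t within {0..})"
    and phi_n0: "\<And>t. t \<ge> 0 \<Longrightarrow> phi n0 t = ft t"
    and phih_ode: "\<And>i t. t \<ge> 0 \<Longrightarrow>
         (phih i has_vector_derivative (- (transpose (fu t) *v phih i t) + lam i *\<^sub>R phih i t))
           (at t within {0..})"
    and biorth: "\<And>i j t. t \<ge> 0 \<Longrightarrow> phi i t \<bullet> phih j t = (if i = j then 1 else 0)"
    and cmin_pos: "0 < cmin" and cmin_cmax: "cmin \<le> cmax"
    and gram_bounds: "\<And>t v. t \<ge> 0 \<Longrightarrow>
         cmin * (v \<bullet> v) \<le> (\<Sum>i\<in>UNIV. v $ i *\<^sub>R phih i t) \<bullet> (\<Sum>i\<in>UNIV. v $ i *\<^sub>R phih i t)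
         \<and> (\<Sum>i\<in>UNIV. v $ i *\<^sub>R phih i t) \<bullet> (\<Sum>i\<in>UNIV. v $ i *\<^sub>R phih i t) \<le> cmax * (v \<bullet> v)"
    (* psiT T, rT T solve the adjoint LSS problem on [0,T] *)
    and lss_psi: "\<And>T t. T > 0 \<Longrightarrow> t \<in> {0..T} \<Longrightarrow>
         (psiT T has_vector_derivative (rT T t - transpose (fu t) *v psiT T t - Ju t)) (at t within {0..T})"
    and lss_r: "\<And>T t. T > 0 \<Longrightarrow> t \<in> {0..T} \<Longrightarrow>
         (rT T has_vector_derivative
            (fu t *v rT T t + ((1 / alpha2) * (psiT T t \<bullet> ft t + Jt t - Jbar)) *\<^sub>R ft t))
           (at t within {0..T})"
    and lss_bc: "\<And>T. T > 0 \<Longrightarrow> psiT T 0 = 0 \<and> psiT T T = 0"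
    (* adjoint shadowing direction *)
    and psiinf_bdd: "bounded (psiinf ` {0..})"
    and psiinf_ode: "\<And>t. t \<ge> 0 \<Longrightarrow>
         (psiinf has_vector_derivative (- (transpose (fu t) *v psiinf t) - Ju t)) (at t within {0..})"
    and psiinf_mean: "((\<lambda>T. (1 / T) * integral {0..T} (\<lambda>t. psiinf t \<bullet> ft t)) \<longlongrightarrow> 0) at_top"
    (* hypotheses of the theorem *)
    and fs_bdd: "bdd_above ((\<lambda>t. norm (fs t)) ` {0..})"
    and shadow_rate: "(\<lambda>T. \<bar>(1 / T) * integral {0..T} (\<lambda>t. Js t + psiinf t \<bullet> fs t) - dJds\<bar>)
                        \<in> O[at_top](\<lambda>T. 1 / sqrt T)"
  shows "(\<exists>g. g \<in> O[at_top](\<lambda>T. 1 / sqrt T) \<and>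
           (\<forall>\<^sub>F T in at_top.
              \<bar>(1 / T) * integral {0..T} (\<lambda>t. Js t + psiT T t \<bullet> fs t) - dJds\<bar>
                \<le> L2norm T (eh psiT psiinf T) * (SUP t\<in>{0..}. norm (fs t)) / sqrt T
                   + (SUP t\<in>{0..}. norm (fs t)) * integral {0..T} (\<lambda>t. norm (ep psiinf T t)) / T
                   + g T))
       \<and> (\<exists>B. \<forall>\<^sub>F T in at_top. L2norm T (eh psiT psiinf T) \<le> B)
       \<and> (\<exists>B. \<forall>\<^sub>F T in at_top. integral {0..T} (\<lambda>t. norm (ep psiinf T t)) \<le> B)
       \<and> (\<lambda>T. \<bar>(1 / T) * integral {0..T} (\<lambda>t. Js t + psiT T t \<bullet> fs t) - dJds\<bar>)
           \<in> O[at_top](\<lambda>T. 1 / sqrt T)"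
proof -
  have u_cont: "continuous_on {0..T} u" for T
    by (rule continuous_on_subset[of "{0..}"], rule continuous_on_vector_derivative)
      (use u_ode in auto)
  obtain L where L: "0 \<le> L" "\<And>x v. x \<in> K \<Longrightarrow> norm (pfu f s x *v v) \<le> L * norm v"
    using C2_pfu_bounded[OF f_C2 K_compact] by metis
  have ft_deriv: "(ft has_vector_derivative (fu t *v ft t)) (at t within {0..})" if "t \<ge> 0" for t
    unfolding ft_def fu_def by (rule C2_field_has_vector_derivative[OF f_C2 u_ode[OF that]])
  have Jt_deriv: "(Jt has_vector_derivative (Ju t \<bullet> ft t)) (at t within {0..})" if "t \<ge> 0" for t
    unfolding Jt_def Ju_def ft_def by (rule smooth_output_has_vector_derivative[OF J_smooth u_ode[OF that]])
  have conserved: "psiinf t \<bullet> ft t + Jt t = Jbar" if "t \<ge> 0" for t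
    by (rule adjoint_shadowing_conservation[OF psiinf_ode ft_deriv Jt_deriv Jbar_lim psiinf_mean that])
  obtain M where M: "\<And>t. t \<ge> 0 \<Longrightarrow> norm (psiinf t) \<le> M"
    using psiinf_bdd unfolding bounded_iff by auto
  have psiT_cont: "continuous_on {0..T} (psiT T)" if "T > 0" for T
    by (rule continuous_on_vector_derivative) (use lss_psi[OF that] in auto)
  have psiinf_cont: "continuous_on {0..T} psiinf" for T
    by (rule continuous_on_subset[of "{0..}"], rule continuous_on_vector_derivative)
      (use psiinf_ode in auto)
  have lss: "lss_error T (\<lambda>t. psiT T t - psiinf t) (rT T) fu phi phih lam n0 alpha2 L cmin cmax M"
    if T: "1 \<le> T" for T
  proof unfold_locales
    have T0: "T > 0" and sub: "{0..T} \<subseteq> {0::real..}" using T by auto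
    show "((\<lambda>t. psiT T t - psiinf t) has_vector_derivative
        (rT T t - transpose (fu t) *v (psiT T t - psiinf t))) (at t within {0..T})" if "t \<in> {0..T}" for t
      using has_vector_derivative_diff[OF lss_psi[OF T0 that]
          has_vector_derivative_within_subset[OF psiinf_ode sub]] that
      by (simp add: matrix_vector_mult_diff_distrib algebra_simps)
    show "(rT T has_vector_derivative (fu t *v rT T t
        + ((1 / alpha2) * ((psiT T t - psiinf t) \<bullet> phi n0 t)) *\<^sub>R phi n0 t)) (at t within {0..T})"
      if "t \<in> {0..T}" for t
    proof -
      have "psiT T t \<bullet> ft t + Jt t - Jbar = (psiT T t - psiinf t) \<bullet> phi n0 t"
        using conserved[of t] phi_n0[of t] that by (simp add: inner_diff_left)
      then show ?thesis using lss_r[OF T0 that] phi_n0[of t] that by simp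
    qed
    show "norm (fu t *v v) \<le> L * norm v" if "t \<in> {0..T}" for t v
      unfolding fu_def using L(2) u_in_K that by simp
    show "(phi i has_vector_derivative (fu t *v phi i t - lam i *\<^sub>R phi i t)) (at t within {0..T})"
      if "t \<in> {0..T}" for i t
      by (rule has_vector_derivative_within_subset[OF phi_ode sub]) (use that in auto)
    show "norm (psiT T 0 - psiinf 0) \<le> M" "norm (psiT T T - psiinf T) \<le> M"
      using lss_bc[OF T0] M[of 0] M[of T] T0 by simp_all
  qed (use T lam_nz biorth gram_bounds cmin_pos cmin_cmax alpha_pos L(1) in auto)
  define eh_bound where "eh_bound = sqrt (2 * lss_error_bound M L alpha2 cmin cmax lam n0 + 8 * (2 * M / (1 - exp (- 2)))\<^sup>2)"
  define Sf where "Sf = (SUP t\<in>{0..}. norm (fs t))"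
  have fs_bound: "norm (fs t) \<le> Sf" if "t \<ge> 0" for t
    unfolding Sf_def using fs_bdd that by (intro cSUP_upper) auto
  define g where "g = (\<lambda>T. \<bar>(1 / T) * integral {0..T} (\<lambda>t. Js t + psiinf t \<bullet> fs t) - dJds\<bar>)"
  have error_le: "\<forall>\<^sub>F T in at_top.
      \<bar>(1 / T) * integral {0..T} (\<lambda>t. Js t + psiT T t \<bullet> fs t) - dJds\<bar>
        \<le> L2norm T (eh psiT psiinf T) * Sf / sqrt T
           + Sf * integral {0..T} (\<lambda>t. norm (ep psiinf T t)) / T + g T"
    using eventually_gt_at_top[of "0::real"]
  proof eventually_elim
    case (elim T)
    show ?case
      unfolding g_def fs_def Js_def
      using C2_continuous_on_pfs[OF f_C2 u_cont] smooth_continuous_on_pJs[OF J_smooth u_cont]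
        psiinf_cont psiT_cont[OF elim] fs_bound[unfolded fs_def] elim
      by (intro sensitivity_error_le) auto
  qed
  have Sf_nonneg: "0 \<le> Sf" using fs_bound[of 0] norm_ge_zero[of "fs 0"] by linarith
  have ep_int_le: "\<forall>\<^sub>F T in at_top. integral {0..T} (\<lambda>t. norm (ep psiinf T t)) \<le> 4 * M / (1 - exp (- 2))"
    using eventually_ge_at_top[of "1::real"] by eventually_elim (rule integral_norm_ep_le[OF _ M])
  have L2_eh_le: "\<forall>\<^sub>F T in at_top. L2norm T (eh psiT psiinf T) \<le> eh_bound"
    using eventually_ge_at_top[of "1::real"] unfolding eh_bound_def
    by eventually_elim (rule L2norm_eh_le[OF lss M])
  have "(\<lambda>T. \<bar>(1 / T) * integral {0..T} (\<lambda>t. Js t + psiT T t \<bullet> fs t) - dJds\<bar>)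
      \<in> O[at_top](\<lambda>T. 1 / sqrt T)"
  proof (rule bigo_inverse_sqrt_of_le[OF error_le])
    show "\<forall>\<^sub>F T in at_top. L2norm T (eh psiT psiinf T) * Sf \<le> eh_bound * Sf"
      using L2_eh_le by eventually_elim (rule mult_right_mono[OF _ Sf_nonneg])
    show "\<forall>\<^sub>F T in at_top. Sf * integral {0..T} (\<lambda>t. norm (ep psiinf T t)) \<le> Sf * (4 * M / (1 - exp (- 2)))"
      using ep_int_le by eventually_elim (rule mult_left_mono[OF _ Sf_nonneg])
  qed (use shadow_rate in \<open>simp_all add: g_def\<close>)
  then show ?thesis
    using shadow_rate error_le L2_eh_le ep_int_le unfolding g_def Sf_def by blast
qed

end
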